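(* Let $\{x_k\}$, $\{d_k\}$ be generated by Algorithm 1 or Algorithm 2 (described in the context) under the Standing Assumption and Matrix Assumption of the context, and suppose the algorithm does not terminate finitely. Write $d_k=u_k+v_k$ with $u_k\in\mathrm{Null}(J_k)$ and $v_k\in\mathrm{Range}(J_k^T)$. Then there exists $\kappa_v>0$ such that for all $k\in\mathbb{N}$, $\max\{\|v_k\|_2,\|v_k\|_2^2\}\le\kappa_v\|c_k\|_2$.
   Context: Notation: $g_k=\nabla f(x_k)$, $c_k=c(x_k)$, $J_k=\nabla c(x_k)^T$; $\phi(x,\tau)=\tau f(x)+\|c(x)\|_1$; $\Delta q(x,\tau,g,H,d)=-\tau(g^Td+\frac12\max\{d^THd,0\})+\|c(x)\|_1$. Matrix Assumption: symmetric $H_k$ with $\|H_k\|_2\le\kappa_H$ and $u^TH_ku\ge\zeta\|u\|_2^2$ whenever $J_ku=0$. Common iteration: $(d_k,y_k)$ solves $H_kd_k+J_k^Ty_k=-g_k$, $J_kd_k=-c_k$; stop if $g_k+J_k^Ty_k=0$ and $c_k=0$. $\tau_k^{trial}=\infty$ if $g_k^Td_k+\max\{d_k^TH_kd_k,0\}\le0$, else $\frac{(1-\sigma)\|c_k\|_1}{g_k^Td_k+\max\{d_k^TH_kd_k,0\}}$; $\tau_k=\tau_{k-1}$ if $\tau_{k-1}\le\tau_k^{trial}$, else $(1-\epsilon)\tau_k^{trial}$; $x_{k+1}=x_k+\alpha_kd_k$. (SD) for trial $\alpha$: $\phi(x_k+\alpha d_k,\tau_k)\le\phi(x_k,\tau_k)-\eta\alpha\Delta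 q(x_k,\tau_k,g_k,H_k,d_k)$. Algorithm 1 (inputs $\tau_{-1}>0$, $\epsilon,\sigma,\eta\in(0,1)$, $\rho>1$, $L_{-1}>0$, $\gamma_{-1,i}>0$): choose $L_{k,0}\in(0,L_{k-1}]$, $\gamma_{k,i,0}\in(0,\gamma_{k-1,i}]$; for $j=0,1,\dots$ with $\Lambda_{k,j}=\tau_kL_{k,j}+\sum_i\gamma_{k,i,j}$: $\widehat\alpha_{k,j}=\frac{2(1-\eta)\Delta q(x_k,\tau_k,g_k,H_k,d_k)}{\Lambda_{k,j}\|d_k\|_2^2}$, $\widetilde\alpha_{k,j}=\widehat\alpha_{k,j}-\frac{4\|c_k\|_1}{\Lambda_{k,j}\|d_k\|_2^2}$; $\alpha_{k,j}=\widehat\alpha_{k,j}$ if $\widehat\alpha_{k,j}<1$, $1$ if $\widetilde\alpha_{k,j}\le1\le\widehat\alpha_{k,j}$, $\widetilde\alpha_{k,j}$ if $\widetilde\alpha_{k,j}>1$; accept ($\alpha_k=\alpha_{k,j}$, $L_k=L_{k,j}$, $\gamma_{k,i}=\gamma_{k,i,j}$) if (SD) holds or if both $f(x_k+\alpha_{k,j}d_k)\le f(x_k)+\alpha_{k,j}g_k^Td_k+\frac12L_{k,j}\alpha_{k,j}^2\|d_k\|_2^2$ (LF) and $|c_i(x_k+\alpha_{k,j}d_k)|\le|c_i(x_k)+\alpha_{k,j}\nabla c_i(x_k)^Td_k|+\frac12\gamma_{k,i,j}\alpha_{k,j}^2\|d_k\|_2^2$ (LC$_i$) for all $i$; otherwise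 multiply $L_{k,j}$ by $\rho$ if (LF) fails and $\gamma_{k,i,j}$ by $\rho$ if (LC$_i$) fails (others unchanged). Algorithm 2 (inputs $\tau_{-1}>0$, $\epsilon,\sigma,\eta,\nu\in(0,1)$, $\alpha>0$): $\alpha_k=\nu^j\alpha$ for the smallest $j\ge0$ such that (SD) holds. Standing Assumption: an open convex set $\mathcal X$ contains all iterates and trial points $x_k+\alpha_{k,j}d_k$; $f$ is $C^1$, bounded below on $\mathcal X$, $\nabla f$ bounded and $L$-Lipschitz on $\mathcal X$; $c$, $\nabla c^T$ bounded on $\mathcal X$; $\nabla c_i$ is $\gamma_i$-Lipschitz on $\mathcal X$; singular values of $\nabla c(x)^T$ bounded away from zero uniformly over $\mathcal X$. *)

theory Defs
  imports "HOL-Analysis.Analysis"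
begin

text \<open>Vectors: x in R^n is real^'n, constraint values in R^m are real^'m.
  Jc x :: real^'n^'m is the Jacobian J(x) = nabla c(x)^T (row i = nabla c_i(x)).\<close>

definition l1norm :: "real^'m \<Rightarrow> real" where
  "l1norm v = (\<Sum>i\<in>UNIV. \<bar>v $ i\<bar>)"

definition merit :: "(real^'n \<Rightarrow> real) \<Rightarrow> (real^'n \<Rightarrow> real^'m) \<Rightarrow> real^'n \<Rightarrow> real \<Rightarrow> real" where
  "merit f c x \<tau> = \<tau> * f x + l1norm (c x)"

definition dq :: "real^'m \<Rightarrow> real \<Rightarrow> real^'n \<Rightarrow> real^'n^'n \<Rightarrow> real^'n \<Rightarrow> real" where
  "dq cx \<tau> gk H d = - \<tau> * (gk \<bullet> d + 1/2 * max (d \<bullet> (H *v d)) 0) + l1norm cx"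

definition SD :: "(real^'n \<Rightarrow> real) \<Rightarrow> (real^'n \<Rightarrow> real^'m) \<Rightarrow> real \<Rightarrow> real^'n \<Rightarrow> real
   \<Rightarrow> real^'n \<Rightarrow> real^'n^'n \<Rightarrow> real^'n \<Rightarrow> real \<Rightarrow> bool" where
  "SD f c \<eta> xk \<tau> gk H d a \<longleftrightarrow>
     merit f c (xk + a *\<^sub>R d) \<tau> \<le> merit f c xk \<tau> - \<eta> * a * dq (c xk) \<tau> gk H d"

text \<open>All min(m,n) singular values of the m x n matrix A are at least s
  (for n >= m: smallest singular value of A is min over unit y of |A^T y|;
   for m >= n: min over unit x of |A x|).\<close>
definition sv_ge :: "real^'n^'m \<Rightarrow> real \<Rightarrow> bool" where
  "sv_ge A s \<longleftrightarrow> (\<forall>z. s * norm z \<le> norm (A *v z)) \<or> (\<forall>w. s * norm w \<le> norm (transpose A *v w))"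

definition standing_assumption ::
  "(real^'n) set \<Rightarrow> (real^'n \<Rightarrow> real) \<Rightarrow> (real^'n \<Rightarrow> real^'n) \<Rightarrow> (real^'n \<Rightarrow> real^'m)
   \<Rightarrow> (real^'n \<Rightarrow> real^'n^'m) \<Rightarrow> bool" where
  "standing_assumption X f g c Jc \<longleftrightarrow>
     open X \<and> convex X \<and>
     (\<forall>x\<in>X. (f has_derivative (\<lambda>h. g x \<bullet> h)) (at x)) \<and> continuous_on X g \<and>
     bdd_below (f ` X) \<and> bounded (g ` X) \<and>
     (\<exists>L. \<forall>x\<in>X. \<forall>z\<in>X. norm (g x - g z) \<le> L * norm (x - z)) \<and>
     (\<forall>x\<in>X. (c has_derivative (\<lambda>h. Jc x *v h)) (at x)) \<and>
     bounded (c ` X) \<and> bounded (Jc ` X) \<and>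
     (\<forall>i. \<exists>\<gamma>. \<forall>x\<in>X. \<forall>z\<in>X. norm (Jc x $ i - Jc z $ i) \<le> \<gamma> * norm (x - z)) \<and>
     (\<exists>s>0. \<forall>x\<in>X. sv_ge (Jc x) s)"

definition matrix_assumption ::
  "(real^'n \<Rightarrow> real^'n^'m) \<Rightarrow> (nat \<Rightarrow> real^'n) \<Rightarrow> (nat \<Rightarrow> real^'n^'n) \<Rightarrow> bool" where
  "matrix_assumption Jc x H \<longleftrightarrow>
     (\<exists>\<kappa>H \<zeta>. \<zeta> > 0 \<and> (\<forall>k. transpose (H k) = H k \<and> onorm (\<lambda>u. H k *v u) \<le> \<kappa>H \<and>
        (\<forall>u. Jc (x k) *v u = 0 \<longrightarrow> \<zeta> * norm u ^ 2 \<le> u \<bullet> (H k *v u))))"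

text \<open>Common iteration (all k; the algorithm does not terminate, so every k occurs).\<close>
definition common_iteration ::
  "(real^'n \<Rightarrow> real^'n) \<Rightarrow> (real^'n \<Rightarrow> real^'m) \<Rightarrow> (real^'n \<Rightarrow> real^'n^'m)
   \<Rightarrow> real \<Rightarrow> real \<Rightarrow> real
   \<Rightarrow> (nat \<Rightarrow> real^'n) \<Rightarrow> (nat \<Rightarrow> real^'n) \<Rightarrow> (nat \<Rightarrow> real^'m) \<Rightarrow> (nat \<Rightarrow> real^'n^'n)
   \<Rightarrow> (nat \<Rightarrow> real) \<Rightarrow> (nat \<Rightarrow> real) \<Rightarrow> bool" where
  "common_iteration g c Jc \<tau>m1 \<epsilon> \<sigma> x d y H \<tau> \<alpha> \<longleftrightarrow>
    (\<forall>k. H k *v d k + transpose (Jc (x k)) *v y k = - g (x k) \<and>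
         Jc (x k) *v d k = - c (x k) \<and>
         (let tp = (if k = 0 then \<tau>m1 else \<tau> (k - 1));
              den = g (x k) \<bullet> d k + max (d k \<bullet> (H k *v d k)) 0
          in if den \<le> 0 then \<tau> k = tp
             else (let tr = (1 - \<sigma>) * l1norm (c (x k)) / den
                   in \<tau> k = (if tp \<le> tr then tp else (1 - \<epsilon>) * tr))) \<and>
         x (Suc k) = x k + \<alpha> k *\<^sub>R d k)"

definition alpha1 :: "real \<Rightarrow> real \<Rightarrow> real \<Rightarrow> real \<Rightarrow> real^'m \<Rightarrow> real^'n \<Rightarrow> real^'n^'n \<Rightarrow> real^'n \<Rightarrow> real" where
  "alpha1 \<eta> \<tau>k Lkj gsum cx gk H d =
    (let \<Lambda> = \<tau>k * Lkj + gsum;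
         ah = 2 * (1 - \<eta>) * dq cx \<tau>k gk H d / (\<Lambda> * norm d ^ 2);
         atl = ah - 4 * l1norm cx / (\<Lambda> * norm d ^ 2)
     in if ah < 1 then ah else if atl \<le> 1 then 1 else atl)"

definition alg1_run ::
  "(real^'n) set \<Rightarrow> (real^'n \<Rightarrow> real) \<Rightarrow> (real^'n \<Rightarrow> real^'n) \<Rightarrow> (real^'n \<Rightarrow> real^'m)
   \<Rightarrow> (real^'n \<Rightarrow> real^'n^'m)
   \<Rightarrow> real \<Rightarrow> real \<Rightarrow> real \<Rightarrow> real \<Rightarrow> real \<Rightarrow> real \<Rightarrow> ('m \<Rightarrow> real)
   \<Rightarrow> (nat \<Rightarrow> real^'n) \<Rightarrow> (nat \<Rightarrow> real^'n) \<Rightarrow> (nat \<Rightarrow> real^'m) \<Rightarrow> (nat \<Rightarrow> real^'n^'n)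
   \<Rightarrow> (nat \<Rightarrow> real) \<Rightarrow> (nat \<Rightarrow> real) \<Rightarrow> bool" where
  "alg1_run X f g c Jc \<tau>m1 \<epsilon> \<sigma> \<eta> \<rho> Lm1 \<gamma>m1 x d y H \<tau> \<alpha> \<longleftrightarrow>
    \<tau>m1 > 0 \<and> 0 < \<epsilon> \<and> \<epsilon> < 1 \<and> 0 < \<sigma> \<and> \<sigma> < 1 \<and> 0 < \<eta> \<and> \<eta> < 1 \<and> \<rho> > 1 \<and>
    Lm1 > 0 \<and> (\<forall>i. \<gamma>m1 i > 0) \<and>
    common_iteration g c Jc \<tau>m1 \<epsilon> \<sigma> x d y H \<tau> \<alpha> \<and>
    (\<exists>(jk :: nat \<Rightarrow> nat) (Lkj :: nat \<Rightarrow> nat \<Rightarrow> real) (Gkj :: nat \<Rightarrow> 'm \<Rightarrow> nat \<Rightarrow> real).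
      \<forall>k. x k \<in> X \<and>
        0 < Lkj k 0 \<and> Lkj k 0 \<le> (if k = 0 then Lm1 else Lkj (k - 1) (jk (k - 1))) \<and>
        (\<forall>i. 0 < Gkj k i 0 \<and> Gkj k i 0 \<le> (if k = 0 then \<gamma>m1 i else Gkj (k - 1) i (jk (k - 1)))) \<and>
        (let aj = (\<lambda>j. alpha1 \<eta> (\<tau> k) (Lkj k j) (\<Sum>i\<in>UNIV. Gkj k i j) (c (x k)) (g (x k)) (H k) (d k));
             LF = (\<lambda>j. f (x k + aj j *\<^sub>R d k) \<le> f (x k) + aj j * (g (x k) \<bullet> d k)
                          + 1/2 * Lkj k j * (aj j)^2 * norm (d k) ^ 2);
             LC = (\<lambda>i j. \<bar>c (x k + aj j *\<^sub>R d k) $ i\<bar> \<le> \<bar>c (x k) $ i + aj j * (Jc (x k) *v d k) $ i\<bar>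
                          + 1/2 * Gkj k i j * (aj j)^2 * norm (d k) ^ 2);
             acc = (\<lambda>j. SD f c \<eta> (x k) (\<tau> k) (g (x k)) (H k) (d k) (aj j) \<or> (LF j \<and> (\<forall>i. LC i j)))
         in (\<forall>j\<le>jk k. x k + aj j *\<^sub>R d k \<in> X) \<and>
            (\<forall>j<jk k. \<not> acc j \<and>
                Lkj k (Suc j) = (if LF j then Lkj k j else \<rho> * Lkj k j) \<and>
                (\<forall>i. Gkj k i (Suc j) = (if LC i j then Gkj k i j else \<rho> * Gkj k i j))) \<and>
            acc (jk k) \<and> \<alpha> k = aj (jk k)))"

definition alg2_run ::
  "(real^'n) set \<Rightarrow> (real^'n \<Rightarrow> real) \<Rightarrow> (real^'n \<Rightarrow> real^'n) \<Rightarrow> (real^'n \<Rightarrow> real^'m)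
   \<Rightarrow> (real^'n \<Rightarrow> real^'n^'m)
   \<Rightarrow> real \<Rightarrow> real \<Rightarrow> real \<Rightarrow> real \<Rightarrow> real \<Rightarrow> real
   \<Rightarrow> (nat \<Rightarrow> real^'n) \<Rightarrow> (nat \<Rightarrow> real^'n) \<Rightarrow> (nat \<Rightarrow> real^'m) \<Rightarrow> (nat \<Rightarrow> real^'n^'n)
   \<Rightarrow> (nat \<Rightarrow> real) \<Rightarrow> (nat \<Rightarrow> real) \<Rightarrow> bool" where
  "alg2_run X f g c Jc \<tau>m1 \<epsilon> \<sigma> \<eta> \<nu> \<alpha>bar x d y H \<tau> \<alpha> \<longleftrightarrow>
    \<tau>m1 > 0 \<and> 0 < \<epsilon> \<and> \<epsilon> < 1 \<and> 0 < \<sigma> \<and> \<sigma> < 1 \<and> 0 < \<eta> \<and> \<eta> < 1 \<and>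
    0 < \<nu> \<and> \<nu> < 1 \<and> \<alpha>bar > 0 \<and>
    common_iteration g c Jc \<tau>m1 \<epsilon> \<sigma> x d y H \<tau> \<alpha> \<and>
    (\<forall>k. x k \<in> X \<and>
       (\<exists>j. \<alpha> k = \<nu> ^ j * \<alpha>bar \<and>
            SD f c \<eta> (x k) (\<tau> k) (g (x k)) (H k) (d k) (\<nu> ^ j * \<alpha>bar) \<and>
            (\<forall>j'<j. \<not> SD f c \<eta> (x k) (\<tau> k) (g (x k)) (H k) (d k) (\<nu> ^ j' * \<alpha>bar)) \<and>
            (\<forall>j'\<le>j. x k + (\<nu> ^ j' * \<alpha>bar) *\<^sub>R d k \<in> X)))"

end

theory Submission
  imports Defs
begin

text \<open>
  Since \<open>u\<^sub>k\<close> lies in the null space of \<open>J\<^sub>k\<close>, the linearized constraint \<open>J\<^sub>k d\<^sub>k = -c\<^sub>k\<close>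
  reads \<open>J\<^sub>k v\<^sub>k = -c\<^sub>k\<close>. On the row space \<open>Range(J\<^sub>k\<^sup>T)\<close> the matrix \<open>J\<^sub>k\<close> is bounded below
  by its smallest singular value, which is at least a uniform \<open>s > 0\<close>; hence
  \<open>s \<parallel>v\<^sub>k\<parallel> \<le> \<parallel>c\<^sub>k\<parallel>\<close>. As \<open>c\<close> is bounded on \<open>X\<close>, so is \<open>\<parallel>v\<^sub>k\<parallel>\<close>, and the
  quadratic term \<open>\<parallel>v\<^sub>k\<parallel>\<^sup>2 \<le> \<parallel>v\<^sub>k\<parallel> \<parallel>c\<^sub>k\<parallel> / s\<close> is linear in \<open>\<parallel>c\<^sub>k\<parallel>\<close> as well.
\<close>

lemma inner_transpose_mult_vec:
  fixes A :: "real^'n^'m"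
  shows "(transpose A *v w) \<bullet> z = w \<bullet> (A *v z)"
  by (metis dot_lmul_matrix transpose_transpose vector_transpose_matrix)

lemma norm_le_on_row_space:
  fixes A :: "real^'n^'m"
  assumes lower: "s * norm w \<le> norm (transpose A *v w)"
    and v: "v = transpose A *v w"
  shows "s * norm v \<le> norm (A *v v)"
proof (cases "s > 0 \<and> v \<noteq> 0")
  case True
  have "norm v ^ 2 = v \<bullet> v"
    by (simp add: power2_norm_eq_inner)
  also have "\<dots> = w \<bullet> (A *v v)"
    using v inner_transpose_mult_vec by metis
  also have "\<dots> \<le> norm w * norm (A *v v)"
    by (rule norm_cauchy_schwarz)
  finally have "s * norm v ^ 2 \<le> s * norm w * norm (A *v v)"
    using True by simp
  also have "\<dots> \<le> norm v * norm (A *v v)"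
    using lower v by (simp add: mult_right_mono)
  finally have "norm v * (s * norm v) \<le> norm v * norm (A *v v)"
    by (simp add: power2_eq_square algebra_simps)
  then show ?thesis
    using True by simp
next
  case False
  then have "s * norm v \<le> 0"
    by (auto simp: mult_nonpos_nonneg)
  then show ?thesis
    using norm_ge_zero order_trans by blast
qed

lemma sv_ge_norm_le_on_row_space:
  fixes A :: "real^'n^'m"
  assumes "sv_ge A s" and "v \<in> range (\<lambda>w. transpose A *v w)"
  shows "s * norm v \<le> norm (A *v v)"
  using assms norm_le_on_row_space unfolding sv_ge_def by blast

lemma max_self_square_le_linear:
  fixes t a s B :: real
  assumes "s > 0" and "0 \<le> t" and "s * t \<le> a" and "a \<le> B"
  shows "max t (t ^ 2) \<le> (1 + B / s) / s * a"
proof -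
  have t_le: "t \<le> a / s" and t_le_B: "t \<le> B / s"
    using assms by (simp_all add: field_simps)
  have "t ^ 2 \<le> B / s * (a / s)"
    unfolding power2_eq_square using mult_mono[OF t_le_B t_le] assms(2) t_le_B by linarith
  moreover have "0 \<le> a" and "0 \<le> B"
    using assms mult_nonneg_nonneg[of s t] by linarith+
  then have "0 \<le> B / s * (a / s)"
    using assms(1) by simp
  ultimately have "max t (t ^ 2) \<le> a / s + B / s * (a / s)"
    using t_le assms(2) by linarith
  also have "\<dots> = (1 + B / s) / s * a"
    by (simp add: algebra_simps add_divide_distrib)
  finally show ?thesis .
qed

theorem lemma2p9:
  fixes X :: "(real^'n) set" and f :: "real^'n \<Rightarrow> real" and g :: "real^'n \<Rightarrow> real^'n"
    and c :: "real^'n \<Rightarrow> real^'m" and Jc :: "real^'n \<Rightarrow> real^'n^'m"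
    and x d u v :: "nat \<Rightarrow> real^'n" and y :: "nat \<Rightarrow> real^'m" and H :: "nat \<Rightarrow> real^'n^'n"
    and \<tau> \<alpha> :: "nat \<Rightarrow> real"
    and \<tau>m1 \<epsilon> \<sigma> \<eta> \<rho> Lm1 \<nu> \<alpha>bar :: real and \<gamma>m1 :: "'m \<Rightarrow> real"
  assumes SA: "standing_assumption X f g c Jc"
    and MA: "matrix_assumption Jc x H"
    and ALG: "alg1_run X f g c Jc \<tau>m1 \<epsilon> \<sigma> \<eta> \<rho> Lm1 \<gamma>m1 x d y H \<tau> \<alpha>
              \<or> alg2_run X f g c Jc \<tau>m1 \<epsilon> \<sigma> \<eta> \<nu> \<alpha>bar x d y H \<tau> \<alpha>"
    and NOTERM: "\<forall>k. \<not> (g (x k) + transpose (Jc (x k)) *v y k = 0 \<and> c (x k) = 0)"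
    and DEC: "\<forall>k. d k = u k + v k \<and> Jc (x k) *v u k = 0 \<and> v k \<in> range (\<lambda>w. transpose (Jc (x k)) *v w)"
  shows "\<exists>\<kappa>v>0. \<forall>k. max (norm (v k)) (norm (v k) ^ 2) \<le> \<kappa>v * norm (c (x k))"
proof -
  obtain s where s: "s > 0" and sv: "\<forall>z\<in>X. sv_ge (Jc z) s"
    using SA unfolding standing_assumption_def by blast
  have "bounded (c ` X)"
    using SA unfolding standing_assumption_def by blast
  then obtain B where B: "\<forall>z\<in>X. norm (c z) \<le> B"
    unfolding bounded_iff by blast
  have iterates: "x k \<in> X" for k
    using ALG unfolding alg1_run_def alg2_run_def by blast
  have "Jc (x k) *v d k = - c (x k)" for k
    using ALG unfolding alg1_run_def alg2_run_def common_iteration_def by blast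
  then have normal_step: "Jc (x k) *v v k = - c (x k)" for k
    using DEC by (metis add_0 matrix_vector_right_distrib)
  have "s * norm (v k) \<le> norm (c (x k))" for k
    using sv_ge_norm_le_on_row_space[of "Jc (x k)" s "v k"] sv iterates DEC normal_step
    by simp
  then have "max (norm (v k)) (norm (v k) ^ 2) \<le> (1 + B / s) / s * norm (c (x k))" for k
    using max_self_square_le_linear s B iterates by simp
  moreover have "0 \<le> B"
    using B iterates[of 0] norm_ge_zero order_trans by blast
  then have "(1 + B / s) / s > 0"
    using s by (simp add: add_pos_nonneg)
  ultimately show ?thesis
    by blast
qed

end
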